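(* Let $\Gamma=F_r$ ($r\ge2$) be the free group, $Y$ its Gromov boundary with the natural $\Gamma$-action, $\{\Gamma_n\}$ a strictly decreasing sequence of finite-index normal subgroups of $\Gamma$ with $\bigcap_n\Gamma_n=\{e_\Gamma\}$, and $Z=\varprojlim\Gamma/\Gamma_n$ with the left translation action of $\Gamma$. Then the product action $\Gamma\curvearrowright Y\times Z$ is minimal.
   Context: $Y$ is the set of infinite reduced words $(x_n)_{n\in\mathbb N}$ in $S\cup S^{-1}$, $S$ a free generating set (i.e. $x_{n+1}\ne x_n^{-1}$), a closed subset of $(S\cup S^{-1})^{\mathbb N}$, with $\Gamma$ acting by concatenation and cancellation. $Z$ is the compact metrizable group of compatible sequences in $\prod_n\Gamma/\Gamma_n$, containing $\Gamma$ as a dense subgroup. *)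

theory Defs
  imports "HOL-Analysis.Analysis" "HOL-Algebra.Coset"
begin

text \<open>Letters of the free group on a generating set S: a letter (s, True) is the
generator s, a letter (s, False) is its inverse.\<close>

type_synonym 'a letter = "'a \<times> bool"

definition inv_letter :: "'a letter \<Rightarrow> 'a letter" where
  "inv_letter x = (fst x, \<not> snd x)"

fun reduced :: "'a letter list \<Rightarrow> bool" where
  "reduced [] = True"
| "reduced [x] = True"
| "reduced (x # y # zs) = (y \<noteq> inv_letter x \<and> reduced (y # zs))"

definition cons_red :: "'a letter \<Rightarrow> 'a letter list \<Rightarrow> 'a letter list" where
  "cons_red x ys = (case ys of [] \<Rightarrow> [x]
     | y # ys' \<Rightarrow> (if y = inv_letter x then ys' else x # ys))"

definition free_grp :: "'a set \<Rightarrow> 'a letter list monoid" where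
  "free_grp S = \<lparr> carrier = {w. set w \<subseteq> S \<times> UNIV \<and> reduced w},
                  mult = (\<lambda>u v. foldr cons_red u v),
                  one = [] \<rparr>"

text \<open>The Gromov boundary Y: infinite reduced words in the letters.\<close>
definition boundary :: "'a set \<Rightarrow> (nat \<Rightarrow> 'a letter) set" where
  "boundary S = {y. (\<forall>n. y n \<in> S \<times> UNIV) \<and> (\<forall>n. y (Suc n) \<noteq> inv_letter (y n))}"

definition boundary_top :: "'a set \<Rightarrow> (nat \<Rightarrow> 'a letter) topology" where
  "boundary_top S = subtopology (product_topology (\<lambda>_. discrete_topology (S \<times> UNIV)) UNIV)
                                (boundary S)"

definition cons_inf :: "'a letter \<Rightarrow> (nat \<Rightarrow> 'a letter) \<Rightarrow> (nat \<Rightarrow> 'a letter)" where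
  "cons_inf x y = (if y 0 = inv_letter x then (\<lambda>n. y (Suc n)) else case_nat x y)"

definition act_Y :: "'a letter list \<Rightarrow> (nat \<Rightarrow> 'a letter) \<Rightarrow> (nat \<Rightarrow> 'a letter)" where
  "act_Y g y = foldr cons_inf g y"

text \<open>Z = inverse limit of the finite quotients Gamma/Gamma_n: compatible sequences
of cosets, with the product of discrete topologies, and left translation by Gamma.\<close>
definition profinite :: "'a set \<Rightarrow> (nat \<Rightarrow> 'a letter list set) \<Rightarrow> (nat \<Rightarrow> 'a letter list set) set" where
  "profinite S Gs = {z. (\<forall>n. z n \<in> rcosets\<^bsub>free_grp S\<^esub> (Gs n)) \<and> (\<forall>n. z (Suc n) \<subseteq> z n)}"

definition profinite_top :: "'a set \<Rightarrow> (nat \<Rightarrow> 'a letter list set) \<Rightarrow> (nat \<Rightarrow> 'a letter list set) topology" where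
  "profinite_top S Gs = subtopology
     (product_topology (\<lambda>n. discrete_topology (rcosets\<^bsub>free_grp S\<^esub> (Gs n))) UNIV)
     (profinite S Gs)"

definition act_Z :: "'a set \<Rightarrow> 'a letter list \<Rightarrow> (nat \<Rightarrow> 'a letter list set) \<Rightarrow> (nat \<Rightarrow> 'a letter list set)" where
  "act_Z S g z = (\<lambda>n. g <#\<^bsub>free_grp S\<^esub> z n)"

definition minimal_action :: "'p topology \<Rightarrow> 'g set \<Rightarrow> ('g \<Rightarrow> 'p \<Rightarrow> 'p) \<Rightarrow> bool" where
  "minimal_action T G act \<longleftrightarrow>
     (\<forall>A. closedin T A \<and> (\<forall>g\<in>G. \<forall>p\<in>A. act g p \<in> A) \<longrightarrow> A = {} \<or> A = topspace T)"

end

theory Submission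
  imports Defs "HOL-Algebra.Multiplicative_Group"
begin

text \<open>It suffices that every orbit is dense, and since both factors carry cylinder
topologies this means: given (y0, z0), a target (y, z) and a depth M, find g such that
g y0 and g z0 agree with y and z below M. If a and b represent the M-th cosets of z0 and z,
then every g = k b a^-1 with k in Gs M moves z0 correctly below level M, as Gs M lies in
each Gs i with i < M. For k take w l^m w^-1, where w is the prefix of length M of y, the
letter l cancels neither against the last letter of w nor against the first letter of
w^-1 b a^-1 y0 (two generators give four letters, so such l exists), and m >= 1 is chosen
with l^m in the finite-index normal subgroup Gs M. Then g y0 = w l^m (w^-1 b a^-1 y0)
involves no cancellation and starts with w.\<close>

lemma inv_letter_inv_letter [simp]: "inv_letter (inv_letter x) = x"
  by (simp add: inv_letter_def)

lemma inv_letter_neq [simp]: "inv_letter x \<noteq> x" "x \<noteq> inv_letter x"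
  by (cases x; simp add: inv_letter_def)+

lemma exists_letter_avoiding:
  fixes p q :: "'a letter"
  assumes "2 \<le> card S"
  shows "\<exists>l \<in> S \<times> UNIV. l \<noteq> p \<and> l \<noteq> q"
proof -
  have "finite S" using assms card.infinite by fastforce
  then obtain s1 s2 where "s1 \<in> S" "s2 \<in> S" "s1 \<noteq> s2"
    using assms card_le_Suc0_iff_eq[of S] by force
  then have "\<exists>l \<in> {(s1, True), (s1, False), (s2, True)}. l \<noteq> p \<and> l \<noteq> q"
    by (cases p; cases q) auto
  with \<open>s1 \<in> S\<close> \<open>s2 \<in> S\<close> show ?thesis by auto
qed

lemma act_Y_Nil [simp]: "act_Y [] y = y"
  by (simp add: act_Y_def)

lemma act_Y_Cons [simp]: "act_Y (x # w) y = cons_inf x (act_Y w y)"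
  by (simp add: act_Y_def)

lemma cons_inf_in_boundary:
  "x \<in> S \<times> UNIV \<Longrightarrow> y \<in> boundary S \<Longrightarrow> cons_inf x y \<in> boundary S"
  unfolding boundary_def cons_inf_def by (auto split: nat.splits)

lemma act_Y_in_boundary:
  "set w \<subseteq> S \<times> UNIV \<Longrightarrow> y \<in> boundary S \<Longrightarrow> act_Y w y \<in> boundary S"
  by (induction w) (auto intro!: cons_inf_in_boundary)

lemma cons_inf_inv_letter_cancel:
  assumes "y \<in> boundary S"
  shows "cons_inf x (cons_inf (inv_letter x) y) = y"
proof (cases "y 0 = x")
  case True
  with assms have "y (Suc 0) \<noteq> inv_letter x" by (auto simp: boundary_def)
  with True show ?thesis by (auto simp: cons_inf_def fun_eq_iff split: nat.splits)
qed (auto simp: cons_inf_def fun_eq_iff)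

lemma act_Y_cons_red:
  assumes "set v \<subseteq> S \<times> UNIV" "y \<in> boundary S"
  shows "act_Y (cons_red x v) y = cons_inf x (act_Y v y)"
proof (cases v)
  case (Cons a v')
  with assms have "act_Y v' y \<in> boundary S" by (intro act_Y_in_boundary) auto
  with Cons show ?thesis
    using cons_inf_inv_letter_cancel[of "act_Y v' y" S x] by (simp add: cons_red_def)
qed (simp add: cons_red_def)

lemma set_cons_red: "set (cons_red x v) \<subseteq> insert x (set v)"
  by (auto simp: cons_red_def split: list.splits)

lemma set_foldr_cons_red:
  "set u \<subseteq> L \<Longrightarrow> set v \<subseteq> L \<Longrightarrow> set (foldr cons_red u v) \<subseteq> L"
  by (induction u) (use set_cons_red in fastforce)+

lemma act_Y_foldr_cons_red:
  assumes "set u \<subseteq> S \<times> UNIV" "set v \<subseteq> S \<times> UNIV" "y \<in> boundary S"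
  shows "act_Y (foldr cons_red u v) y = act_Y u (act_Y v y)"
  using assms(1)
proof (induction u)
  case (Cons x u)
  with assms(2) have "set (foldr cons_red u v) \<subseteq> S \<times> UNIV"
    by (intro set_foldr_cons_red) auto
  with Cons assms(3) show ?case by (simp add: act_Y_cons_red)
qed simp

lemma act_Y_reduced:
  assumes "reduced w" "w \<noteq> [] \<Longrightarrow> y 0 \<noteq> inv_letter (last w)"
  shows "act_Y w y = (\<lambda>i. if i < length w then w ! i else y (i - length w))"
  using assms
proof (induction w)
  case (Cons x w)
  have "reduced w" using Cons.prems(1) by (cases w) auto
  then have IH: "act_Y w y = (\<lambda>i. if i < length w then w ! i else y (i - length w))"
    using Cons by (cases w) auto
  have "act_Y w y 0 \<noteq> inv_letter x"
    using Cons.prems IH by (cases w) auto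
  then show ?case
    using IH by (auto simp: cons_inf_def fun_eq_iff nth_Cons split: nat.splits)
qed simp

lemma carrier_free_grp: "carrier (free_grp S) = {w. set w \<subseteq> S \<times> UNIV \<and> reduced w}"
  by (simp add: free_grp_def)

lemma mult_free_grp: "u \<otimes>\<^bsub>free_grp S\<^esub> v = foldr cons_red u v"
  by (simp add: free_grp_def)

lemma one_free_grp: "\<one>\<^bsub>free_grp S\<^esub> = []"
  by (simp add: free_grp_def)

lemma act_Y_mult:
  "u \<in> carrier (free_grp S) \<Longrightarrow> v \<in> carrier (free_grp S) \<Longrightarrow> y \<in> boundary S \<Longrightarrow>
   act_Y (u \<otimes>\<^bsub>free_grp S\<^esub> v) y = act_Y u (act_Y v y)"
  using act_Y_foldr_cons_red[of u S v y] by (simp add: carrier_free_grp mult_free_grp)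

lemma act_Y_carrier_in_boundary:
  "g \<in> carrier (free_grp S) \<Longrightarrow> y \<in> boundary S \<Longrightarrow> act_Y g y \<in> boundary S"
  by (simp add: carrier_free_grp act_Y_in_boundary)

lemma reduced_iff_nth:
  "reduced xs \<longleftrightarrow> (\<forall>i. Suc i < length xs \<longrightarrow> xs ! Suc i \<noteq> inv_letter (xs ! i))"
proof (induction xs rule: reduced.induct)
  case (3 x y zs)
  then show ?case
    by (auto simp: nth_Cons split: nat.splits)
qed auto

lemma boundary_prefix_in_carrier:
  "y \<in> boundary S \<Longrightarrow> map y [0..<M] \<in> carrier (free_grp S)"
  by (auto simp: carrier_free_grp reduced_iff_nth boundary_def) (metis mem_Times_iff fst_conv)

lemma replicate_in_carrier:
  "l \<in> S \<times> UNIV \<Longrightarrow> replicate n l \<in> carrier (free_grp S)"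
  by (auto simp: carrier_free_grp reduced_iff_nth)

lemma foldr_cons_red_replicate:
  "foldr cons_red (replicate n l) (replicate k l) = replicate (n + k) l"
proof (induction n)
  case (Suc n)
  then show ?case by (cases "n + k") (auto simp: cons_red_def)
qed simp

lemma pow_singleton_free_grp: "[l] [^]\<^bsub>free_grp S\<^esub> n = replicate n l"
proof (induction n)
  case (Suc n)
  then show ?case using foldr_cons_red_replicate[of n l 1] by (simp add: mult_free_grp)
qed (simp add: one_free_grp)

lemma (in normal) finite_index_pow_mem:
  assumes "finite (rcosets H)" "x \<in> carrier G"
  shows "\<exists>n::nat. n \<ge> 1 \<and> x [^] n \<in> H"
proof -
  interpret Q: group "G Mod H" by (rule factorgroup_is_group)
  have fin: "finite (carrier (G Mod H))" using assms(1) unfolding FactGroup_def by simp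
  have x: "H #> x \<in> carrier (G Mod H)" using assms(2) unfolding carrier_FactGroup by blast
  have "H #> (x [^] Q.ord (H #> x)) = H"
    using FactGroup_pow[OF assms(2), of "Q.ord (H #> x)"] Q.pow_ord_eq_1[OF x] by simp
  then have "x [^] Q.ord (H #> x) \<in> H"
    using coset_join1[OF _ nat_pow_closed[OF assms(2)] subgroup_axioms] by blast
  then show ?thesis using Q.ord_ge_1[OF fin x] by blast
qed

lemma (in normal) lcos_rcos_eq:
  assumes g: "g \<in> carrier G" and a: "a \<in> carrier G"
  shows "g <# (H #> a) = H #> (g \<otimes> a)"
proof -
  have "g <# (H #> a) = g <# (a <# H)" using a coset_eq by simp
  also have "\<dots> = (g \<otimes> a) <# H" using g a subset by (simp add: lcos_m_assoc)
  also have "\<dots> = H #> (g \<otimes> a)" using g a coset_eq by simp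
  finally show ?thesis .
qed

lemma finite_index_orbit_meets_cylinder:
  assumes H: "H \<lhd> free_grp S" "finite (rcosets\<^bsub>free_grp S\<^esub> H)"
    and S: "2 \<le> card S"
    and y: "x \<in> boundary S" "y \<in> boundary S"
  shows "\<exists>k\<in>H. \<forall>i<M. act_Y k x i = y i"
proof -
  let ?G = "free_grp S"
  interpret normal H ?G by (rule H(1))
  define w where "w = map y [0..<M]"
  have w: "w \<in> carrier ?G" unfolding w_def using y(2) by (rule boundary_prefix_in_carrier)
  define x' where "x' = act_Y (inv\<^bsub>?G\<^esub> w) x"
  obtain l where l: "l \<in> S \<times> UNIV" "l \<noteq> inv_letter (x' 0)" "l \<noteq> inv_letter (last w)"
    using exists_letter_avoiding[OF S] by blast
  have "[l] \<in> carrier ?G" using replicate_in_carrier[OF l(1), of 1] by simp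
  then obtain m :: nat where "m \<ge> 1" "[l] [^]\<^bsub>?G\<^esub> m \<in> H"
    using finite_index_pow_mem[OF H(2)] by blast
  then have m: "m \<ge> 1" "replicate m l \<in> H" by (simp_all only: pow_singleton_free_grp)
  define r where "r = replicate m l"
  have r: "r \<in> carrier ?G" unfolding r_def using l(1) by (rule replicate_in_carrier)
  define k where "k = w \<otimes>\<^bsub>?G\<^esub> r \<otimes>\<^bsub>?G\<^esub> inv\<^bsub>?G\<^esub> w"
  have "k \<in> H" unfolding k_def r_def using w m(2) by (rule inv_op_closed2)
  have "act_Y k x = act_Y w (act_Y r x')"
    unfolding k_def x'_def using w r y(1)
    by (simp add: act_Y_mult act_Y_carrier_in_boundary del: act_Y_Cons)
  also have "act_Y r x' = (\<lambda>i. if i < m then l else x' (i - m))"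
    using r l(2) by (subst act_Y_reduced) (auto simp: r_def carrier_free_grp)
  also have "act_Y w \<dots> = (\<lambda>i. if i < M then y i else (if i - M < m then l else x' (i - M - m)))"
    using w l(3) m(1) by (subst act_Y_reduced) (auto simp: w_def carrier_free_grp)
  finally show ?thesis using \<open>k \<in> H\<close> by (intro bexI[of _ k]) simp_all
qed

lemma topspace_boundary_top [simp]: "topspace (boundary_top S) = boundary S"
  by (auto simp: boundary_top_def boundary_def)

lemma topspace_profinite_top [simp]: "topspace (profinite_top S Gs) = profinite S Gs"
  by (auto simp: profinite_top_def profinite_def)

lemma openin_subtopology_product_cylinder:
  fixes X :: "nat \<Rightarrow> 'a topology"
  assumes "openin (subtopology (product_topology X UNIV) B) U" "x \<in> U"
  shows "\<exists>N. \<forall>x' \<in> topspace (subtopology (product_topology X UNIV) B).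
           (\<forall>i<N. x' i = x i) \<longrightarrow> x' \<in> U"
proof -
  obtain V where V: "openin (product_topology X UNIV) V" "U = V \<inter> B"
    using assms(1) by (auto simp: openin_subtopology)
  have "x \<in> V" using V(2) assms(2) by blast
  then obtain W where
    W: "finite {i \<in> UNIV. W i \<noteq> topspace (X i)}" "x \<in> Pi\<^sub>E UNIV W" "Pi\<^sub>E UNIV W \<subseteq> V"
    using V(1) unfolding openin_product_topology_alt by blast
  obtain N where N: "{i \<in> UNIV. W i \<noteq> topspace (X i)} \<subseteq> {..<N}"
    using finite_nat_bounded[OF W(1)] by blast
  have "x' \<in> U" if x': "x' \<in> topspace (subtopology (product_topology X UNIV) B)"
    "\<forall>i<N. x' i = x i" for x'
  proof -
    have "x' i \<in> W i" for i
    proof (cases "i < N")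
      case True
      then show ?thesis using x'(2) W(2) by auto
    next
      case False
      then have "W i = topspace (X i)" using N by auto
      then show ?thesis using x'(1) by (auto simp: topspace_subtopology)
    qed
    then have "x' \<in> Pi\<^sub>E UNIV W" using x'(1) by (auto simp: topspace_subtopology)
    then show ?thesis using W(3) V(2) x'(1) by (auto simp: topspace_subtopology)
  qed
  then show ?thesis by blast
qed

lemma openin_boundary_profinite_cylinder:
  assumes "openin (prod_topology (boundary_top S) (profinite_top S Gs)) W" "(y, z) \<in> W"
  shows "\<exists>N. \<forall>y' \<in> boundary S. \<forall>z' \<in> profinite S Gs.
           (\<forall>i<N. y' i = y i \<and> z' i = z i) \<longrightarrow> (y', z') \<in> W"
proof -
  obtain U V where UV: "openin (boundary_top S) U" "openin (profinite_top S Gs) V"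
      "y \<in> U" "z \<in> V" "U \<times> V \<subseteq> W"
    using openin_prod_topology_alt[THEN iffD1, OF assms(1), rule_format, OF assms(2)] by meson
  obtain N1 where N1: "\<forall>y' \<in> topspace (boundary_top S). (\<forall>i<N1. y' i = y i) \<longrightarrow> y' \<in> U"
    using openin_subtopology_product_cylinder[of _ "boundary S" U y] UV(1,3)
    unfolding boundary_top_def by blast
  obtain N2 where N2: "\<forall>z' \<in> topspace (profinite_top S Gs). (\<forall>i<N2. z' i = z i) \<longrightarrow> z' \<in> V"
    using openin_subtopology_product_cylinder[of _ "profinite S Gs" V z] UV(2,4)
    unfolding profinite_top_def by blast
  have "(y', z') \<in> W"
    if "y' \<in> boundary S" "z' \<in> profinite S Gs" "\<forall>i<max N1 N2. y' i = y i \<and> z' i = z i"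
    for y' z'
    using N1 N2 UV(5) that by auto
  then show ?thesis by blast
qed

lemma minimal_action_if_orbits_dense:
  assumes "\<And>p W. p \<in> topspace T \<Longrightarrow> openin T W \<Longrightarrow> W \<noteq> {} \<Longrightarrow> \<exists>g\<in>G. act g p \<in> W"
  shows "minimal_action T G act"
  unfolding minimal_action_def
proof (intro allI impI)
  fix A assume A: "closedin T A \<and> (\<forall>g\<in>G. \<forall>p\<in>A. act g p \<in> A)"
  have "topspace T \<subseteq> A" if "p \<in> A" for p
  proof (rule ccontr)
    assume "\<not> topspace T \<subseteq> A"
    then have "openin T (topspace T - A)" "topspace T - A \<noteq> {}"
      using A by auto
    then show False
      using assms[of p "topspace T - A"] A closedin_subset \<open>p \<in> A\<close> by blast
  qed
  then show "A = {} \<or> A = topspace T" using A closedin_subset by blast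
qed

locale profinite_tower =
  fixes S :: "'a set" and Gs :: "nat \<Rightarrow> 'a letter list set"
  assumes normal_Gs: "\<And>n. Gs n \<lhd> free_grp S"
    and Gs_Suc_subset: "\<And>n. Gs (Suc n) \<subseteq> Gs n"
begin

sublocale group "free_grp S"
  using normal_Gs[of 0] by (rule normal.axioms(2))

lemma subgroup_Gs: "subgroup (Gs n) (free_grp S)"
  using normal_Gs by (rule normal_imp_subgroup)

lemma Gs_antimono: "i \<le> j \<Longrightarrow> Gs j \<subseteq> Gs i"
  using Gs_Suc_subset by (rule lift_Suc_antimono_le)

lemma profinite_level_coset:
  "z \<in> profinite S Gs \<Longrightarrow> \<exists>x\<in>carrier (free_grp S). z n = Gs n #>\<^bsub>free_grp S\<^esub> x"
  unfolding profinite_def RCOSETS_def by auto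

lemma profinite_coset_below:
  assumes z: "z \<in> profinite S Gs" "z j = Gs j #>\<^bsub>free_grp S\<^esub> x"
    and x: "x \<in> carrier (free_grp S)" and "i \<le> j"
  shows "z i = Gs i #>\<^bsub>free_grp S\<^esub> x"
proof -
  have "z (Suc n) \<subseteq> z n" for n using z(1) by (simp add: profinite_def)
  then have "z j \<subseteq> z i" using \<open>i \<le> j\<close> by (rule lift_Suc_antimono_le)
  moreover have "x \<in> z j" using z(2) rcos_self[OF x subgroup_Gs] by simp
  moreover obtain x' where "x' \<in> carrier (free_grp S)" "z i = Gs i #>\<^bsub>free_grp S\<^esub> x'"
    using profinite_level_coset[OF z(1)] by blast
  ultimately show ?thesis using repr_independence[OF _ _ subgroup_Gs] by auto
qed

lemma act_Z_in_profinite: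
  assumes g: "g \<in> carrier (free_grp S)" and z: "z \<in> profinite S Gs"
  shows "act_Z S g z \<in> profinite S Gs"
proof -
  have "g <#\<^bsub>free_grp S\<^esub> z n \<in> rcosets\<^bsub>free_grp S\<^esub> (Gs n)" for n
  proof -
    obtain x where x: "x \<in> carrier (free_grp S)" "z n = Gs n #>\<^bsub>free_grp S\<^esub> x"
      using profinite_level_coset[OF z] by blast
    moreover have "g \<otimes>\<^bsub>free_grp S\<^esub> x \<in> carrier (free_grp S)" using g x(1) by simp
    ultimately show ?thesis
      using normal.lcos_rcos_eq[OF normal_Gs g x(1)] by (auto simp: RCOSETS_def)
  qed
  moreover have "g <#\<^bsub>free_grp S\<^esub> z (Suc n) \<subseteq> g <#\<^bsub>free_grp S\<^esub> z n" for n
    using z by (auto simp: profinite_def l_coset_def)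
  ultimately show ?thesis by (simp add: profinite_def act_Z_def)
qed

lemma orbit_meets_cylinder:
  assumes S: "2 \<le> card S" and fin: "finite (rcosets\<^bsub>free_grp S\<^esub> (Gs M))"
    and y: "y0 \<in> boundary S" "y \<in> boundary S"
    and z: "z0 \<in> profinite S Gs" "z \<in> profinite S Gs"
  shows "\<exists>g\<in>carrier (free_grp S). \<forall>i<M. act_Y g y0 i = y i \<and> act_Z S g z0 i = z i"
proof -
  let ?G = "free_grp S"
  obtain a b where ab: "a \<in> carrier ?G" "z0 M = Gs M #>\<^bsub>?G\<^esub> a"
    "b \<in> carrier ?G" "z M = Gs M #>\<^bsub>?G\<^esub> b"
    using profinite_level_coset z by meson
  define c where "c = b \<otimes>\<^bsub>?G\<^esub> inv\<^bsub>?G\<^esub> a"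
  have c: "c \<in> carrier ?G" using ab by (simp add: c_def)
  obtain k where k: "k \<in> Gs M" "\<forall>i<M. act_Y k (act_Y c y0) i = y i"
    using finite_index_orbit_meets_cylinder[OF normal_Gs fin S
        act_Y_carrier_in_boundary[OF c y(1)] y(2)] by blast
  have k_carrier: "k \<in> carrier ?G" using k(1) subgroup.subset[OF subgroup_Gs] by blast
  have "act_Z S (k \<otimes>\<^bsub>?G\<^esub> c) z0 i = z i" if "i < M" for i
  proof -
    have "act_Z S (k \<otimes>\<^bsub>?G\<^esub> c) z0 i = Gs i #>\<^bsub>?G\<^esub> (k \<otimes>\<^bsub>?G\<^esub> c \<otimes>\<^bsub>?G\<^esub> a)"
      using profinite_coset_below[OF z(1) ab(2,1)] \<open>i < M\<close> k_carrier c ab(1)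
      by (simp add: act_Z_def normal.lcos_rcos_eq[OF normal_Gs])
    also have "k \<otimes>\<^bsub>?G\<^esub> c \<otimes>\<^bsub>?G\<^esub> a = k \<otimes>\<^bsub>?G\<^esub> b"
      using ab(1,3) k_carrier by (simp add: c_def m_assoc)
    also have "Gs i #>\<^bsub>?G\<^esub> (k \<otimes>\<^bsub>?G\<^esub> b) = (Gs i #>\<^bsub>?G\<^esub> k) #>\<^bsub>?G\<^esub> b"
      using coset_mult_assoc[OF subgroup.subset[OF subgroup_Gs] k_carrier ab(3)] by simp
    also have "Gs i #>\<^bsub>?G\<^esub> k = Gs i"
      using k(1) Gs_antimono[of i M] \<open>i < M\<close> coset_join2[OF k_carrier subgroup_Gs] by auto
    also have "\<dots> #>\<^bsub>?G\<^esub> b = z i"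
      using profinite_coset_below[OF z(2) ab(4,3)] \<open>i < M\<close> by simp
    finally show ?thesis .
  qed
  moreover have "act_Y (k \<otimes>\<^bsub>?G\<^esub> c) y0 = act_Y k (act_Y c y0)"
    using k_carrier c y(1) by (rule act_Y_mult)
  ultimately show ?thesis using k(2) k_carrier c by (intro bexI[of _ "k \<otimes>\<^bsub>?G\<^esub> c"]) auto
qed

end

theorem lemma5p1:
  fixes S :: "'a set" and Gs :: "nat \<Rightarrow> 'a letter list set"
  assumes "finite S" and "card S \<ge> 2"
    and "\<And>n. Gs n \<lhd> free_grp S"
    and "\<And>n. finite (rcosets\<^bsub>free_grp S\<^esub> (Gs n))"
    and "\<And>n. Gs (Suc n) \<subset> Gs n"
    and "(\<Inter>n. Gs n) = {[]}"
  shows "minimal_action (prod_topology (boundary_top S) (profinite_top S Gs))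
           (carrier (free_grp S))
           (\<lambda>g (y, z). (act_Y g y, act_Z S g z))"
proof (rule minimal_action_if_orbits_dense)
  interpret profinite_tower S Gs
    using assms(3,5) by (intro profinite_tower.intro) auto
  fix p W
  assume p: "p \<in> topspace (prod_topology (boundary_top S) (profinite_top S Gs))"
    and W: "openin (prod_topology (boundary_top S) (profinite_top S Gs)) W" "W \<noteq> {}"
  obtain y0 z0 where p0: "p = (y0, z0)" "y0 \<in> boundary S" "z0 \<in> profinite S Gs"
    using p by auto
  obtain y z where yz: "(y, z) \<in> W" using W(2) by auto
  then obtain N where N: "\<forall>y' \<in> boundary S. \<forall>z' \<in> profinite S Gs.
      (\<forall>i<N. y' i = y i \<and> z' i = z i) \<longrightarrow> (y', z') \<in> W"
    using openin_boundary_profinite_cylinder[OF W(1)] by blast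
  have "y \<in> boundary S" "z \<in> profinite S Gs"
    using openin_subset[OF W(1)] yz by auto
  then obtain g where g: "g \<in> carrier (free_grp S)"
      "\<forall>i<N. act_Y g y0 i = y i \<and> act_Z S g z0 i = z i"
    using orbit_meets_cylinder[OF assms(2,4) p0(2) _ p0(3)] by blast
  then have "(act_Y g y0, act_Z S g z0) \<in> W"
    using N act_Y_carrier_in_boundary[OF g(1) p0(2)] act_Z_in_profinite[OF g(1) p0(3)] by blast
  then show "\<exists>g\<in>carrier (free_grp S). (\<lambda>g (y, z). (act_Y g y, act_Z S g z)) g p \<in> W"
    using g(1) p0(1) by auto
qed

end
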